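(* Let $\alpha\in(0,2)$. For every $\lambda>0$ there exist $\mathcal C_0,\mathcal C_1>0$ such that $\mathcal C_0\delta^{\alpha/2}\le q(\delta,\lambda)\le\mathcal C_1\delta^{\alpha/2}$ for all sufficiently small $\delta>0$.
   Context: $B_\alpha$ is fractional Brownian motion with $\mathrm{Cov}(B_\alpha(t),B_\alpha(s))=\frac{|t|^\alpha+|s|^\alpha-|t-s|^\alpha}{2}$; $Z_\alpha(t)=\sqrt2B_\alpha(t)-|t|^\alpha$; $\eta$ is a standard exponential random variable independent of $Z_\alpha$. For $\delta,\lambda>0$, $q(\delta,\lambda)=\mathbb P\big(Z_\alpha(-\delta)+\lambda^{-1}\eta<0,\ Z_\alpha(\delta)+\lambda^{-1}\eta<0\big)$. *)

theory Defs
  imports "HOL-Probability.Probability"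
begin

definition fbm_cov :: "real \<Rightarrow> real \<Rightarrow> real \<Rightarrow> real" where
  "fbm_cov \<alpha> t s = (\<bar>t\<bar> powr \<alpha> + \<bar>s\<bar> powr \<alpha> - \<bar>t - s\<bar> powr \<alpha>) / 2"

definition centered_gaussian :: "'a measure \<Rightarrow> ('a \<Rightarrow> real) \<Rightarrow> real \<Rightarrow> bool" where
  "centered_gaussian M X v \<longleftrightarrow>
     X \<in> borel_measurable M \<and>
     ((v = 0 \<and> (AE \<omega> in M. X \<omega> = 0)) \<or>
      (v > 0 \<and> distributed M lborel X (normal_density 0 (sqrt v))))"

definition is_fBm :: "'a measure \<Rightarrow> real \<Rightarrow> (real \<Rightarrow> 'a \<Rightarrow> real) \<Rightarrow> bool" where
  "is_fBm M \<alpha> B \<longleftrightarrow>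
     (\<forall>t. B t \<in> borel_measurable M) \<and>
     (\<forall>T c. finite T \<longrightarrow>
        centered_gaussian M (\<lambda>\<omega>. \<Sum>t\<in>T. c t * B t \<omega>)
          (\<Sum>t\<in>T. \<Sum>s\<in>T. c t * c s * fbm_cov \<alpha> t s))"

definition Zproc :: "real \<Rightarrow> (real \<Rightarrow> 'a \<Rightarrow> real) \<Rightarrow> real \<Rightarrow> 'a \<Rightarrow> real" where
  "Zproc \<alpha> B t \<omega> = sqrt 2 * B t \<omega> - \<bar>t\<bar> powr \<alpha>"

definition qprob :: "'a measure \<Rightarrow> real \<Rightarrow> (real \<Rightarrow> 'a \<Rightarrow> real) \<Rightarrow> ('a \<Rightarrow> real)
    \<Rightarrow> real \<Rightarrow> real \<Rightarrow> real" where
  "qprob M \<alpha> B \<eta> \<delta> lam = measure M {\<omega> \<in> space M.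
      Zproc \<alpha> B (-\<delta>) \<omega> + \<eta> \<omega> / lam < 0 \<and> Zproc \<alpha> B \<delta> \<omega> + \<eta> \<omega> / lam < 0}"

end

theory Submission
  imports Defs
begin

text \<open>
  With \<open>s = \<delta> powr (\<alpha>/2)\<close>, the pair \<open>(B(-\<delta>)/s, B(\<delta>)/s)\<close> is standard Gaussian with
  correlation \<open>1 - 2 powr (\<alpha>-1) > -1\<close> for every \<open>\<delta>\<close>, while the drift \<open>\<delta> powr \<alpha> = s^2\<close> is of
  smaller order than \<open>s\<close>. Lower bound: both coordinates lie below \<open>-1\<close> with a probability
  bounded away from \<open>0\<close>, and independently \<open>\<eta> \<le> \<lambda> sqrt 2 s\<close> with probability of order \<open>s\<close>;
  together these force the event. Upper bound: the event implies
  \<open>\<lambda> sqrt 2 B(\<delta>) + \<eta> < \<lambda> s^2\<close>, so an exponential Chebyshev inequality with parameter \<open>1/s\<close>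
  and independence bound its probability by \<open>exp (\<lambda> s + \<lambda>^2) E[exp (-\<eta>/s)] \<le> exp (\<lambda> s + \<lambda>^2) s\<close>.
\<close>

definition has_std_binormal_mgf :: "'a measure \<Rightarrow> real \<Rightarrow> ('a \<Rightarrow> real) \<Rightarrow> ('a \<Rightarrow> real) \<Rightarrow> bool" where
  "has_std_binormal_mgf M r X Y \<longleftrightarrow>
     (\<forall>u v. integrable M (\<lambda>\<omega>. exp (u * X \<omega> + v * Y \<omega>)) \<and>
        (\<integral>\<omega>. exp (u * X \<omega> + v * Y \<omega>) \<partial>M) = exp ((u\<^sup>2 + v\<^sup>2 + 2 * r * u * v) / 2))"

lemma normal_density_times_exp:
  assumes "0 < \<sigma>"
  shows "integrable lborel (\<lambda>x. normal_density 0 \<sigma> x * exp x)"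
    and "(\<integral>x. normal_density 0 \<sigma> x * exp x \<partial>lborel) = exp (\<sigma>\<^sup>2 / 2)"
proof -
  have shift: "(\<lambda>x. normal_density 0 \<sigma> x * exp x) = (\<lambda>x. exp (\<sigma>\<^sup>2 / 2) * normal_density (\<sigma>\<^sup>2) \<sigma> x)"
  proof
    fix x
    have "-(x - 0)\<^sup>2 / (2 * \<sigma>\<^sup>2) + x = \<sigma>\<^sup>2 / 2 + (-(x - \<sigma>\<^sup>2)\<^sup>2 / (2 * \<sigma>\<^sup>2))"
      using assms by (simp add: field_simps power2_eq_square)
    then have "exp (-(x - 0)\<^sup>2 / (2 * \<sigma>\<^sup>2)) * exp x = exp (\<sigma>\<^sup>2 / 2) * exp (-(x - \<sigma>\<^sup>2)\<^sup>2 / (2 * \<sigma>\<^sup>2))"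
      by (metis exp_add)
    then show "normal_density 0 \<sigma> x * exp x = exp (\<sigma>\<^sup>2 / 2) * normal_density (\<sigma>\<^sup>2) \<sigma> x"
      unfolding normal_density_def by (simp add: mult_ac)
  qed
  show "integrable lborel (\<lambda>x. normal_density 0 \<sigma> x * exp x)"
    unfolding shift using integrable_normal_density[OF assms] by simp
  show "(\<integral>x. normal_density 0 \<sigma> x * exp x \<partial>lborel) = exp (\<sigma>\<^sup>2 / 2)"
    unfolding shift using integral_normal_density[OF assms] by simp
qed

lemma (in prob_space) centered_gaussian_integral_exp:
  assumes "centered_gaussian M L v"
  shows "integrable M (\<lambda>\<omega>. exp (L \<omega>))" and "(\<integral>\<omega>. exp (L \<omega>) \<partial>M) = exp (v / 2)"
proof -
  have [measurable]: "L \<in> borel_measurable M"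
    using assms unfolding centered_gaussian_def by auto
  have "integrable M (\<lambda>\<omega>. exp (L \<omega>)) \<and> (\<integral>\<omega>. exp (L \<omega>) \<partial>M) = exp (v / 2)"
  proof (cases "v = 0 \<and> (AE \<omega> in M. L \<omega> = 0)")
    case True
    then have ae: "AE \<omega> in M. exp (L \<omega>) = 1" by auto
    then show ?thesis
      using True integrable_cong_AE[OF _ _ ae] integral_cong_AE[OF _ _ ae] prob_space by simp
  next
    case False
    then have "v > 0" and D: "distributed M lborel L (normal_density 0 (sqrt v))"
      using assms unfolding centered_gaussian_def by auto
    then show ?thesis
      using distributed_integrable[OF D, of exp] distributed_integral[OF D, of exp]
        normal_density_times_exp[of "sqrt v"] by simp
  qed
  then show "integrable M (\<lambda>\<omega>. exp (L \<omega>))" and "(\<integral>\<omega>. exp (L \<omega>) \<partial>M) = exp (v / 2)" by auto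
qed

lemma (in prob_space) is_fBm_integral_exp:
  assumes "is_fBm M \<alpha> B" and "finite T"
  shows "integrable M (\<lambda>\<omega>. exp (\<Sum>t\<in>T. c t * B t \<omega>))"
    and "(\<integral>\<omega>. exp (\<Sum>t\<in>T. c t * B t \<omega>) \<partial>M) = exp ((\<Sum>t\<in>T. \<Sum>s\<in>T. c t * c s * fbm_cov \<alpha> t s) / 2)"
  using assms centered_gaussian_integral_exp unfolding is_fBm_def by blast+

lemma (in prob_space) is_fBm_symmetric_pair_std_binormal:
  assumes "is_fBm M \<alpha> B" and "0 < \<delta>"
  defines "s \<equiv> \<delta> powr (\<alpha> / 2)"
  shows "has_std_binormal_mgf M (1 - 2 powr \<alpha> / 2) (\<lambda>\<omega>. B (-\<delta>) \<omega> / s) (\<lambda>\<omega>. B \<delta> \<omega> / s)"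
  unfolding has_std_binormal_mgf_def
proof (intro allI)
  fix u v :: real
  define r where "r = 1 - 2 powr \<alpha> / 2"
  define c where "c = (\<lambda>t. if t = -\<delta> then u / s else v / s)"
  have s0: "0 < s" and ss: "s\<^sup>2 = \<delta> powr \<alpha>"
    using \<open>0 < \<delta>\<close> unfolding s_def by (simp_all add: power2_eq_square powr_add[symmetric])
  have neq: "-\<delta> \<noteq> \<delta>" and c: "c (-\<delta>) = u / s" "c \<delta> = v / s"
    using \<open>0 < \<delta>\<close> unfolding c_def by auto
  have var: "fbm_cov \<alpha> (-\<delta>) (-\<delta>) = s\<^sup>2" "fbm_cov \<alpha> \<delta> \<delta> = s\<^sup>2"
    unfolding fbm_cov_def ss using \<open>0 < \<delta>\<close> by auto
  have "\<bar>-\<delta> - \<delta>\<bar> powr \<alpha> = 2 powr \<alpha> * s\<^sup>2" "\<bar>\<delta> - (-\<delta>)\<bar> powr \<alpha> = 2 powr \<alpha> * s\<^sup>2"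
    unfolding ss using \<open>0 < \<delta>\<close> by (auto simp: powr_mult)
  then have cov: "fbm_cov \<alpha> (-\<delta>) \<delta> = r * s\<^sup>2" "fbm_cov \<alpha> \<delta> (-\<delta>) = r * s\<^sup>2"
    unfolding fbm_cov_def r_def ss using \<open>0 < \<delta>\<close> by (auto simp: field_simps)
  have lin: "(\<Sum>t\<in>{-\<delta>, \<delta>}. c t * B t \<omega>) = u * (B (-\<delta>) \<omega> / s) + v * (B \<delta> \<omega> / s)" for \<omega>
    using neq c by simp
  have "(\<Sum>t\<in>{-\<delta>, \<delta>}. \<Sum>t'\<in>{-\<delta>, \<delta>}. c t * c t' * fbm_cov \<alpha> t t')
      = (u/s) * (u/s) * s\<^sup>2 + (u/s) * (v/s) * (r * s\<^sup>2) + (v/s) * (u/s) * (r * s\<^sup>2) + (v/s) * (v/s) * s\<^sup>2"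
    using neq c by (simp add: var cov)
  also have "\<dots> = u\<^sup>2 + v\<^sup>2 + 2 * r * u * v"
    using s0 by (simp add: field_simps power2_eq_square)
  finally show "integrable M (\<lambda>\<omega>. exp (u * (B (-\<delta>) \<omega> / s) + v * (B \<delta> \<omega> / s))) \<and>
      (\<integral>\<omega>. exp (u * (B (-\<delta>) \<omega> / s) + v * (B \<delta> \<omega> / s)) \<partial>M) = exp ((u\<^sup>2 + v\<^sup>2 + 2 * r * u * v) / 2)"
    using is_fBm_integral_exp[OF assms(1), of "{-\<delta>, \<delta>}" c] unfolding lin by simp
qed

lemma le_quadrant_cover:
  fixes e K x y :: real
  assumes "0 < e" and "0 < K"
  shows "e \<le> K * of_bool (x < -1 \<and> y < -1) + e\<^sup>2 / K + e * exp (3 * (x + 1)) + e * exp (3 * (y + 1))"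
proof (cases "x < -1 \<and> y < -1")
  case True
  have "e \<le> K + e\<^sup>2 / K"
  proof (cases "e \<le> K")
    case True
    moreover have "0 \<le> e\<^sup>2 / K" using assms by simp
    ultimately show ?thesis by linarith
  next
    case False
    then have "e \<le> e\<^sup>2 / K" using assms by (simp add: field_simps power2_eq_square)
    then show ?thesis using assms by linarith
  qed
  then show ?thesis using True assms by (simp add: add_increasing2)
next
  case False
  then have "e \<le> e * exp (3 * (x + 1)) \<or> e \<le> e * exp (3 * (y + 1))"
    using assms by (auto simp: mult_le_cancel_left1)
  moreover have "0 \<le> e\<^sup>2 / K" "0 \<le> e * exp (3 * (x + 1))" "0 \<le> e * exp (3 * (y + 1))"
    using assms by auto
  ultimately show ?thesis using False by auto
qed

lemma exp_neg_nine_halves_le: "exp (-9/2 :: real) \<le> 1/8"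
proof -
  have "(1 + 9/4) * (1 + 9/4) \<le> exp (9/4 :: real) * exp (9/4)"
    using exp_ge_add_one_self[of "9/4"] by (intro mult_mono) auto
  then have "8 \<le> exp (9/2 :: real)" by (simp add: exp_add[symmetric])
  then show ?thesis by (simp add: exp_minus field_simps)
qed

lemma (in prob_space) std_binormal_tilted_moments:
  assumes mgf: "has_std_binormal_mgf M r X Y" and "-1 < r"
  defines "t \<equiv> 4 / (1 + r)"
  shows "(\<integral>\<omega>. exp ((- t) * X \<omega> + (- t) * Y \<omega>) \<partial>M) = exp (16 / (1 + r))"
    and "(\<integral>\<omega>. exp ((- 2 * t) * X \<omega> + (- 2 * t) * Y \<omega>) \<partial>M) = exp (64 / (1 + r))"
    and "(\<integral>\<omega>. exp ((3 - t) * X \<omega> + (- t) * Y \<omega>) \<partial>M) = exp (16 / (1 + r)) * exp (-15/2)"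
    and "(\<integral>\<omega>. exp ((- t) * X \<omega> + (3 - t) * Y \<omega>) \<partial>M) = exp (16 / (1 + r)) * exp (-15/2)"
proof -
  define a where "a = 1 + r"
  have a0: "0 < a" using \<open>-1 < r\<close> unfolding a_def by simp
  have t2a: "t\<^sup>2 * a = 16 / a" and ta: "t * a = 4"
    unfolding t_def a_def[symmetric] using a0 by (simp_all add: power2_eq_square)
  have mgf_eq: "(\<integral>\<omega>. exp (u * X \<omega> + v * Y \<omega>) \<partial>M) = exp ((u\<^sup>2 + v\<^sup>2 + 2 * r * u * v) / 2)" for u v
    using mgf unfolding has_std_binormal_mgf_def by blast
  have "((- t)\<^sup>2 + (- t)\<^sup>2 + 2 * r * (- t) * (- t)) / 2 = t\<^sup>2 * a"
    "((- 2 * t)\<^sup>2 + (- 2 * t)\<^sup>2 + 2 * r * (- 2 * t) * (- 2 * t)) / 2 = 4 * (t\<^sup>2 * a)"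
    "((3 - t)\<^sup>2 + (- t)\<^sup>2 + 2 * r * (3 - t) * (- t)) / 2 = t\<^sup>2 * a - 3 * (t * a) + 9/2"
    "((- t)\<^sup>2 + (3 - t)\<^sup>2 + 2 * r * (- t) * (3 - t)) / 2 = t\<^sup>2 * a - 3 * (t * a) + 9/2"
    unfolding a_def by (simp_all add: power2_eq_square field_simps)
  then show "(\<integral>\<omega>. exp ((- t) * X \<omega> + (- t) * Y \<omega>) \<partial>M) = exp (16 / (1 + r))"
    and "(\<integral>\<omega>. exp ((- 2 * t) * X \<omega> + (- 2 * t) * Y \<omega>) \<partial>M) = exp (64 / (1 + r))"
    and "(\<integral>\<omega>. exp ((3 - t) * X \<omega> + (- t) * Y \<omega>) \<partial>M) = exp (16 / (1 + r)) * exp (-15/2)"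
    and "(\<integral>\<omega>. exp ((- t) * X \<omega> + (3 - t) * Y \<omega>) \<partial>M) = exp (16 / (1 + r)) * exp (-15/2)"
    unfolding mgf_eq t2a ta a_def[symmetric] by (simp_all add: exp_add[symmetric])
qed

text \<open>
  Tilting by \<open>exp (-t (X + Y))\<close> with \<open>t = 4/(1+r)\<close> moves both means to \<open>-4\<close>; integrating the
  cover inequality shows that the quadrant carries at least half of the tilted mass.
\<close>
lemma (in prob_space) std_binormal_quadrant_lower:
  assumes [measurable]: "X \<in> borel_measurable M" "Y \<in> borel_measurable M"
    and mgf: "has_std_binormal_mgf M r X Y" and "-1 < r"
  shows "exp (-32 / (1 + r)) / 8 \<le> prob {\<omega>\<in>space M. X \<omega> < -1 \<and> Y \<omega> < -1}"
proof -
  define t where "t = 4 / (1 + r)"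
  define Q where "Q = {\<omega>\<in>space M. X \<omega> < -1 \<and> Y \<omega> < -1}"
  define Z where "Z = (\<lambda>u v \<omega>. exp (u * X \<omega> + v * Y \<omega>))"
  define m where "m = exp (16 / (1 + r))"
  define K where "K = 4 * exp (64 / (1 + r)) / m"
  have K0: "0 < K" unfolding K_def m_def by simp
  have Q[measurable]: "Q \<in> sets M" unfolding Q_def by measurable
  have intQ: "integrable M (indicator Q :: 'a \<Rightarrow> real)"
    by (intro integrable_real_indicator Q) (simp add: less_top[symmetric])
  have intZ: "integrable M (Z u v)" for u v
    using mgf unfolding has_std_binormal_mgf_def Z_def by blast
  have moments: "integral\<^sup>L M (Z (-t) (-t)) = m" "integral\<^sup>L M (Z (-2*t) (-2*t)) = exp (64 / (1 + r))"
    "integral\<^sup>L M (Z (3-t) (-t)) = m * exp (-15/2)" "integral\<^sup>L M (Z (-t) (3-t)) = m * exp (-15/2)"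
    using std_binormal_tilted_moments[OF mgf \<open>-1 < r\<close>] unfolding Z_def t_def m_def by simp_all
  have cover: "Z (-t) (-t) \<omega> \<le> K * indicator Q \<omega> + Z (-2*t) (-2*t) \<omega> / K
      + exp 3 * Z (3-t) (-t) \<omega> + exp 3 * Z (-t) (3-t) \<omega>" if "\<omega> \<in> space M" for \<omega>
  proof -
    have "Z (-2*t) (-2*t) \<omega> = (Z (-t) (-t) \<omega>)\<^sup>2"
      "exp 3 * Z (3-t) (-t) \<omega> = Z (-t) (-t) \<omega> * exp (3 * (X \<omega> + 1))"
      "exp 3 * Z (-t) (3-t) \<omega> = Z (-t) (-t) \<omega> * exp (3 * (Y \<omega> + 1))"
      "(indicator Q \<omega> :: real) = of_bool (X \<omega> < -1 \<and> Y \<omega> < -1)"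
      using that unfolding Z_def Q_def
      by (simp_all add: exp_add[symmetric] power2_eq_square algebra_simps)
    moreover have "0 < Z (-t) (-t) \<omega>" unfolding Z_def by simp
    ultimately show ?thesis
      using le_quadrant_cover[OF _ K0, of "Z (-t) (-t) \<omega>" "X \<omega>" "Y \<omega>"] by (simp only:)
  qed
  have "m \<le> (\<integral>\<omega>. K * indicator Q \<omega> + Z (-2*t) (-2*t) \<omega> / K
      + exp 3 * Z (3-t) (-t) \<omega> + exp 3 * Z (-t) (3-t) \<omega> \<partial>M)"
    unfolding moments(1)[symmetric] using cover intZ intQ
    by (intro integral_mono Bochner_Integration.integrable_add integrable_mult_right integrable_divide) auto
  also have "\<dots> = K * prob Q + exp (64 / (1 + r)) / K + 2 * (exp 3 * (m * exp (-15/2)))"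
    using intZ intQ moments by simp
  also have "exp 3 * (m * exp (-15/2)) = m * exp (-9/2)"
    by (simp add: mult.left_commute exp_add[symmetric])
  also have "exp (64 / (1 + r)) / K = m / 4"
    unfolding K_def m_def by simp
  finally have "m \<le> K * prob Q + m / 4 + 2 * (m * exp (-9/2))" .
  moreover have "m * exp (-9/2) \<le> m / 8"
    using exp_neg_nine_halves_le mult_left_mono[of _ _ m] unfolding m_def by fastforce
  ultimately have "m / (2 * K) \<le> prob Q"
    using K0 by (simp add: field_simps)
  moreover have "m / (2 * K) = exp (-32 / (1 + r)) / 8"
  proof -
    have "exp (16 / (1 + r)) * exp (16 / (1 + r)) = exp (-32 / (1 + r)) * exp (64 / (1 + r))"
      by (simp flip: exp_add)
    then show ?thesis unfolding K_def m_def by (simp add: field_simps)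
  qed
  ultimately show ?thesis unfolding Q_def by simp
qed

lemma sets_vimage_algebra_compose_subset:
  assumes X: "X \<in> S \<rightarrow> space N" and f: "f \<in> measurable N L"
  shows "sets (vimage_algebra S (\<lambda>\<omega>. f (X \<omega>)) L) \<subseteq> sets (vimage_algebra S X N)"
proof
  fix E assume "E \<in> sets (vimage_algebra S (\<lambda>\<omega>. f (X \<omega>)) L)"
  moreover have "(\<lambda>\<omega>. f (X \<omega>)) \<in> S \<rightarrow> space L"
    using X measurable_space[OF f] by auto
  ultimately obtain A where A: "A \<in> sets L" "E = (\<lambda>\<omega>. f (X \<omega>)) -` A \<inter> S"
    by (auto simp: sets_vimage_algebra2)
  then have "E = X -` (f -` A \<inter> space N) \<inter> S"
    using X by auto
  then show "E \<in> sets (vimage_algebra S X N)"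
    using in_vimage_algebra[OF measurable_sets[OF f A(1)], of X S] by simp
qed

lemma (in prob_space) indep_var_of_indep_set_vimage:
  assumes indep: "indep_set (sets (vimage_algebra (space M) X N)) (sets (vimage_algebra (space M) Y K))"
    and X: "random_variable N X" and Y: "random_variable K Y"
    and f: "f \<in> measurable N L" and g: "g \<in> measurable K L"
  shows "indep_var L (\<lambda>\<omega>. f (X \<omega>)) L (\<lambda>\<omega>. g (Y \<omega>))"
proof -
  have sub: "sets (vimage_algebra (space M) (\<lambda>\<omega>. f (X \<omega>)) L) \<subseteq> sets (vimage_algebra (space M) X N)"
    "sets (vimage_algebra (space M) (\<lambda>\<omega>. g (Y \<omega>)) L) \<subseteq> sets (vimage_algebra (space M) Y K)"
    using sets_vimage_algebra_compose_subset[OF _ f, of X] sets_vimage_algebra_compose_subset[OF _ g, of Y]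
      measurable_space[OF X] measurable_space[OF Y] by auto
  have "indep_set (sets (vimage_algebra (space M) (\<lambda>\<omega>. f (X \<omega>)) L))
      (sets (vimage_algebra (space M) (\<lambda>\<omega>. g (Y \<omega>)) L))"
    unfolding indep_set_def
    by (rule indep_sets_mono_sets[OF indep[unfolded indep_set_def]]) (use sub in \<open>auto split: bool.split\<close>)
  then show ?thesis
    using measurable_compose[OF X f] measurable_compose[OF Y g]
    by (simp add: indep_var_eq sets_vimage_algebra)
qed

lemma (in prob_space) indep_set_vimage_prob_conj:
  assumes indep: "indep_set (sets (vimage_algebra (space M) X N)) (sets (vimage_algebra (space M) Y K))"
    and "{x \<in> space N. P x} \<in> sets N" and "{y \<in> space K. Q y} \<in> sets K"
    and X: "X \<in> space M \<rightarrow> space N" and Y: "Y \<in> space M \<rightarrow> space K"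
  shows "prob {\<omega> \<in> space M. P (X \<omega>) \<and> Q (Y \<omega>)}
    = prob {\<omega> \<in> space M. P (X \<omega>)} * prob {\<omega> \<in> space M. Q (Y \<omega>)}"
proof -
  have "{\<omega> \<in> space M. P (X \<omega>)} = X -` {x \<in> space N. P x} \<inter> space M"
    "{\<omega> \<in> space M. Q (Y \<omega>)} = Y -` {y \<in> space K. Q y} \<inter> space M"
    using X Y by auto
  then have "{\<omega> \<in> space M. P (X \<omega>)} \<in> sets (vimage_algebra (space M) X N)"
    "{\<omega> \<in> space M. Q (Y \<omega>)} \<in> sets (vimage_algebra (space M) Y K)"
    using in_vimage_algebra[OF assms(2), of X "space M"] in_vimage_algebra[OF assms(3), of Y "space M"]
    by simp_all
  moreover have "{\<omega> \<in> space M. P (X \<omega>) \<and> Q (Y \<omega>)}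
      = {\<omega> \<in> space M. P (X \<omega>)} \<inter> {\<omega> \<in> space M. Q (Y \<omega>)}"
    by auto
  ultimately show ?thesis using indep_setD[OF indep] by simp
qed

lemma (in prob_space) exponential_distributed_integral_exp:
  assumes D: "distributed M lborel \<eta> (exponential_density l)" and "0 < l" and "0 \<le> k"
  shows "integrable M (\<lambda>\<omega>. exp (- k * \<eta> \<omega>))"
    and "(\<integral>\<omega>. exp (- k * \<eta> \<omega>) \<partial>M) = l / (l + k)"
proof -
  have lk: "0 < l + k" using assms by simp
  have tilt: "(\<lambda>x. exponential_density l x * exp (- k * x)) = (\<lambda>x. l / (l + k) * exponential_density (l + k) x)"
  proof
    fix x
    have "exp (- x * l) * exp (- k * x) = exp (- x * (l + k))"
      by (simp add: exp_add[symmetric] algebra_simps)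
    then show "exponential_density l x * exp (- k * x) = l / (l + k) * exponential_density (l + k) x"
      using lk by (simp add: exponential_density_def)
  qed
  have nn: "(\<integral>\<^sup>+x. ennreal (exponential_density (l + k) x) \<partial>lborel) = 1"
    using nn_integral_erlang_ith_moment[OF lk, of 0 0] by simp
  have "integrable lborel (exponential_density (l + k))"
    by (rule integrableI_nonneg) (use nn exponential_density_nonneg[OF lk] in auto)
  moreover have "(\<integral>x. exponential_density (l + k) x \<partial>lborel) = 1"
    by (subst integral_eq_nn_integral) (use nn exponential_density_nonneg[OF lk] in auto)
  ultimately show "integrable M (\<lambda>\<omega>. exp (- k * \<eta> \<omega>))"
    and "(\<integral>\<omega>. exp (- k * \<eta> \<omega>) \<partial>M) = l / (l + k)"
    using distributed_integrable[OF D, of "\<lambda>x. exp (- k * x)"]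
      distributed_integral[OF D, of "\<lambda>x. exp (- k * x)"] exponential_density_nonneg[OF \<open>0 < l\<close>]
    unfolding tilt by simp_all
qed

lemma half_le_one_minus_exp_neg:
  fixes y :: real
  assumes "0 \<le> y" and "y \<le> 1"
  shows "y / 2 \<le> 1 - exp (- y)"
proof -
  have "exp (- y) \<le> 1 / (1 + y)"
    using exp_ge_add_one_self[of y] assms by (simp add: exp_minus field_simps)
  also have "\<dots> \<le> 1 - y / 2"
    using assms by (simp add: field_simps) (simp add: algebra_simps power2_eq_square mult_left_le)
  finally show ?thesis by simp
qed

lemma Zproc_add_neg:
  assumes "B t \<omega> < - s" and "c \<le> sqrt 2 * s"
  shows "Zproc \<alpha> B t \<omega> + c < 0"
proof -
  have "sqrt 2 * B t \<omega> < - (sqrt 2 * s)"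
    using mult_strict_left_mono[OF assms(1), of "sqrt 2"] by simp
  moreover have "0 \<le> \<bar>t\<bar> powr \<alpha>"
    by simp
  ultimately show ?thesis
    using assms(2) unfolding Zproc_def by linarith
qed

lemma (in prob_space) qprob_lower_bound:
  assumes "\<alpha> < 2" and fBm: "is_fBm M \<alpha> B"
    and D: "distributed M lborel \<eta> (exponential_density 1)"
    and indep: "indep_set (sets (vimage_algebra (space M) (\<lambda>\<omega> t. B t \<omega>) (PiM UNIV (\<lambda>_. borel))))
                  (sets (vimage_algebra (space M) \<eta> borel))"
    and "0 < lam" and "0 < \<delta>" and small: "lam * sqrt 2 * \<delta> powr (\<alpha> / 2) \<le> 1"
  shows "exp (-32 / (2 - 2 powr \<alpha> / 2)) / 8 * (lam * sqrt 2 / 2) * \<delta> powr (\<alpha> / 2)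
    \<le> qprob M \<alpha> B \<eta> \<delta> lam"
proof -
  define s where "s = \<delta> powr (\<alpha> / 2)"
  define r where "r = 1 - 2 powr \<alpha> / 2"
  define y where "y = lam * sqrt 2 * s"
  have s0: "0 < s" using \<open>0 < \<delta>\<close> unfolding s_def by simp
  have y: "0 \<le> y" "y \<le> 1" using small s0 \<open>0 < lam\<close> unfolding y_def s_def by auto
  have [measurable]: "B t \<in> borel_measurable M" for t using fBm unfolding is_fBm_def by auto
  have [measurable]: "\<eta> \<in> borel_measurable M" using distributed_measurable[OF D] by simp
  have "2 powr \<alpha> < (2::real) powr 2" using \<open>\<alpha> < 2\<close> by (intro powr_less_mono) auto
  then have "-1 < r" unfolding r_def by simp
  then have quadrant: "exp (-32 / (1 + r)) / 8 \<le> prob {\<omega>\<in>space M. B (-\<delta>) \<omega> / s < -1 \<and> B \<delta> \<omega> / s < -1}"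
    using std_binormal_quadrant_lower is_fBm_symmetric_pair_std_binormal[OF fBm \<open>0 < \<delta>\<close>]
    unfolding r_def s_def by measurable
  have tail: "y / 2 \<le> prob {\<omega>\<in>space M. \<eta> \<omega> \<le> y}"
    using exponential_distributedD_le[OF D y(1)] half_le_one_minus_exp_neg[OF y] by simp
  have "prob {\<omega>\<in>space M. (B (-\<delta>) \<omega> / s < -1 \<and> B \<delta> \<omega> / s < -1) \<and> \<eta> \<omega> \<le> y}
      = prob {\<omega>\<in>space M. B (-\<delta>) \<omega> / s < -1 \<and> B \<delta> \<omega> / s < -1} * prob {\<omega>\<in>space M. \<eta> \<omega> \<le> y}"
  proof -
    have "{f \<in> space (PiM UNIV (\<lambda>_. borel)). f (-\<delta>) / s < -1 \<and> f \<delta> / s < -1}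
        \<in> sets (PiM UNIV (\<lambda>_. borel :: real measure))"
      by measurable
    from indep_set_vimage_prob_conj[OF indep this, of "\<lambda>x. x \<le> y"] show ?thesis
      by (simp add: space_PiM)
  qed
  also have "\<dots> \<ge> exp (-32 / (1 + r)) / 8 * (y / 2)"
    using quadrant tail y by (intro mult_mono) auto
  finally have "exp (-32 / (1 + r)) / 8 * (y / 2)
      \<le> prob {\<omega>\<in>space M. (B (-\<delta>) \<omega> / s < -1 \<and> B \<delta> \<omega> / s < -1) \<and> \<eta> \<omega> \<le> y}" .
  also have "\<dots> \<le> qprob M \<alpha> B \<eta> \<delta> lam"
    unfolding qprob_def
  proof (intro finite_measure_mono subsetI)
    fix \<omega> assume "\<omega> \<in> {\<omega>\<in>space M. (B (-\<delta>) \<omega> / s < -1 \<and> B \<delta> \<omega> / s < -1) \<and> \<eta> \<omega> \<le> y}"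
    then have \<omega>: "\<omega> \<in> space M" "B (-\<delta>) \<omega> < - s" "B \<delta> \<omega> < - s" "\<eta> \<omega> / lam \<le> sqrt 2 * s"
      using s0 \<open>0 < lam\<close> by (auto simp: y_def field_simps)
    then show "\<omega> \<in> {\<omega> \<in> space M. Zproc \<alpha> B (-\<delta>) \<omega> + \<eta> \<omega> / lam < 0 \<and> Zproc \<alpha> B \<delta> \<omega> + \<eta> \<omega> / lam < 0}"
      using \<omega>(1) Zproc_add_neg[where B=B and \<omega>=\<omega>, OF \<omega>(2,4)]
        Zproc_add_neg[where B=B and \<omega>=\<omega>, OF \<omega>(3,4)] by simp
  qed (unfold Zproc_def, measurable)
  finally show ?thesis
    unfolding y_def r_def s_def by (simp add: field_simps)
qed

lemma (in prob_space) qprob_upper_bound: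
  assumes fBm: "is_fBm M \<alpha> B"
    and D: "distributed M lborel \<eta> (exponential_density 1)"
    and indep: "indep_set (sets (vimage_algebra (space M) (\<lambda>\<omega> t. B t \<omega>) (PiM UNIV (\<lambda>_. borel))))
                  (sets (vimage_algebra (space M) \<eta> borel))"
    and "0 < lam" and "0 < \<delta>"
  shows "qprob M \<alpha> B \<eta> \<delta> lam \<le> exp (lam * \<delta> powr (\<alpha> / 2) + lam\<^sup>2) * \<delta> powr (\<alpha> / 2)"
proof -
  define s where "s = \<delta> powr (\<alpha> / 2)"
  define F where "F = (\<lambda>\<omega>. exp (- (lam * sqrt 2 / s) * B \<delta> \<omega>))"
  define G where "G = (\<lambda>\<omega>. exp (- (1 / s) * \<eta> \<omega>))"
  define E where "E = {\<omega> \<in> space M. Zproc \<alpha> B (-\<delta>) \<omega> + \<eta> \<omega> / lam < 0 \<and> Zproc \<alpha> B \<delta> \<omega> + \<eta> \<omega> / lam < 0}"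
  have s0: "0 < s" and ss: "\<bar>\<delta>\<bar> powr \<alpha> = s\<^sup>2"
    using \<open>0 < \<delta>\<close> unfolding s_def by (simp_all add: power2_eq_square powr_add[symmetric])
  have [measurable]: "B t \<in> borel_measurable M" for t using fBm unfolding is_fBm_def by auto
  have [measurable]: "\<eta> \<in> borel_measurable M" using distributed_measurable[OF D] by simp
  have E[measurable]: "E \<in> sets M" unfolding E_def Zproc_def by measurable
  have "(\<Sum>t\<in>{\<delta>}. \<Sum>t'\<in>{\<delta>}. (- (lam * sqrt 2 / s)) * (- (lam * sqrt 2 / s)) * fbm_cov \<alpha> t t') / 2 = lam\<^sup>2"
    using s0 by (simp add: fbm_cov_def ss field_simps power2_eq_square)
  then have intF: "integrable M F" and F: "integral\<^sup>L M F = exp (lam\<^sup>2)"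
    using is_fBm_integral_exp[OF fBm, of "{\<delta>}" "\<lambda>_. - (lam * sqrt 2 / s)"] unfolding F_def by simp_all
  have intG: "integrable M G" and G: "integral\<^sup>L M G = s / (s + 1)"
    using exponential_distributed_integral_exp[OF D, of "1 / s"] s0 unfolding G_def by (simp_all add: field_simps)
  have indepFG: "indep_var borel F borel G"
    using indep_var_of_indep_set_vimage[OF indep, of "\<lambda>f. exp (- (lam * sqrt 2 / s) * f \<delta>)" borel "\<lambda>x. exp (- (1 / s) * x)"]
    unfolding F_def G_def by (simp add: measurable_PiM_single') measurable
  have chebyshev: "indicator E \<omega> \<le> exp (lam * s) * (F \<omega> * G \<omega>)" if "\<omega> \<in> space M" for \<omega>
  proof (cases "\<omega> \<in> E")
    case True
    then have "lam * (sqrt 2 * B \<delta> \<omega>) - lam * s\<^sup>2 + \<eta> \<omega> < 0"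
      using \<open>0 < lam\<close> unfolding E_def Zproc_def ss by (simp add: field_simps)
    then have "0 \<le> (lam * s\<^sup>2 - lam * sqrt 2 * B \<delta> \<omega> - \<eta> \<omega>) / s"
      using s0 by (simp add: algebra_simps)
    moreover have "exp (lam * s) * (F \<omega> * G \<omega>) = exp ((lam * s\<^sup>2 - lam * sqrt 2 * B \<delta> \<omega> - \<eta> \<omega>) / s)"
      unfolding F_def G_def using s0 by (simp add: exp_add[symmetric] field_simps power2_eq_square)
    ultimately show ?thesis using True by simp
  qed (simp add: F_def G_def)
  have "qprob M \<alpha> B \<eta> \<delta> lam = (\<integral>\<omega>. indicator E \<omega> \<partial>M)"
    unfolding qprob_def E_def[symmetric] using E by simp
  also have "\<dots> \<le> (\<integral>\<omega>. exp (lam * s) * (F \<omega> * G \<omega>) \<partial>M)"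
    using chebyshev E indep_var_integrable[OF indepFG intF intG]
    by (intro integral_mono) (auto simp: less_top[symmetric])
  also have "\<dots> = exp (lam * s) * exp (lam\<^sup>2) * (s / (s + 1))"
    using indep_var_lebesgue_integral[OF indepFG intF intG] F G by simp
  also have "\<dots> \<le> exp (lam * s + lam\<^sup>2) * s"
    using s0 by (simp add: exp_add field_simps)
  finally show ?thesis unfolding s_def .
qed

lemma eventually_powr_le_at_right_0:
  fixes a b :: real
  assumes "0 < a" and "0 < b"
  shows "\<forall>\<^sub>F x in at_right 0. 0 < x \<and> x powr a \<le> b"
proof -
  have "\<forall>\<^sub>F x in at_right (0::real). 0 \<le> x"
    by (rule eventually_mono[OF eventually_at_right_less]) simp
  then have "((\<lambda>x. x powr a) \<longlongrightarrow> 0) (at_right (0::real))"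
    using assms by (auto intro!: tendsto_zero_powrI)
  then have "\<forall>\<^sub>F x in at_right 0. x powr a < b"
    using \<open>0 < b\<close> by (rule order_tendstoD)
  then show ?thesis
    using eventually_at_right_less by eventually_elim auto
qed

theorem lemma3p5:
  fixes M :: "'a measure" and \<alpha> :: real and B :: "real \<Rightarrow> 'a \<Rightarrow> real" and \<eta> :: "'a \<Rightarrow> real"
  assumes "prob_space M"
    and "0 < \<alpha>" and "\<alpha> < 2"
    and "is_fBm M \<alpha> B"
    and "distributed M lborel \<eta> (exponential_density 1)"
    and "prob_space.indep_set M
           (sets (vimage_algebra (space M) (\<lambda>\<omega> t. B t \<omega>) (PiM UNIV (\<lambda>_. borel))))
           (sets (vimage_algebra (space M) \<eta> borel))"
  shows "\<forall>lam>0. \<exists>C0>0. \<exists>C1>0. \<forall>\<^sub>F \<delta> in at_right 0.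
           C0 * \<delta> powr (\<alpha> / 2) \<le> qprob M \<alpha> B \<eta> \<delta> lam \<and>
           qprob M \<alpha> B \<eta> \<delta> lam \<le> C1 * \<delta> powr (\<alpha> / 2)"
proof (intro allI impI)
  fix lam :: real assume "0 < lam"
  interpret prob_space M by fact
  define C0 where "C0 = exp (-32 / (2 - 2 powr \<alpha> / 2)) / 8 * (lam * sqrt 2 / 2)"
  define C1 where "C1 = exp (lam + lam\<^sup>2)"
  have "\<forall>\<^sub>F \<delta> in at_right 0. 0 < \<delta> \<and> \<delta> powr (\<alpha> / 2) \<le> min 1 (1 / (lam * sqrt 2))"
    using \<open>0 < \<alpha>\<close> \<open>0 < lam\<close> by (intro eventually_powr_le_at_right_0) auto
  then have "\<forall>\<^sub>F \<delta> in at_right 0. C0 * \<delta> powr (\<alpha> / 2) \<le> qprob M \<alpha> B \<eta> \<delta> lam \<and>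
      qprob M \<alpha> B \<eta> \<delta> lam \<le> C1 * \<delta> powr (\<alpha> / 2)"
  proof eventually_elim
    case (elim \<delta>)
    then have "0 < \<delta>" and small: "lam * sqrt 2 * \<delta> powr (\<alpha> / 2) \<le> 1"
      and exp_le: "exp (lam * \<delta> powr (\<alpha> / 2) + lam\<^sup>2) \<le> C1"
      using \<open>0 < lam\<close> unfolding C1_def by (auto simp: field_simps mult_left_le)
    have "qprob M \<alpha> B \<eta> \<delta> lam \<le> exp (lam * \<delta> powr (\<alpha> / 2) + lam\<^sup>2) * \<delta> powr (\<alpha> / 2)"
      by (rule qprob_upper_bound[OF assms(4,5,6) \<open>0 < lam\<close> \<open>0 < \<delta>\<close>])
    also have "\<dots> \<le> C1 * \<delta> powr (\<alpha> / 2)"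
      using exp_le by (rule mult_right_mono) simp
    finally show ?case
      using qprob_lower_bound[OF \<open>\<alpha> < 2\<close> assms(4,5,6) \<open>0 < lam\<close> \<open>0 < \<delta>\<close> small]
      unfolding C0_def by simp
  qed
  moreover have "0 < C0" "0 < C1"
    using \<open>0 < lam\<close> unfolding C0_def C1_def by simp_all
  ultimately show "\<exists>C0>0. \<exists>C1>0. \<forall>\<^sub>F \<delta> in at_right 0. C0 * \<delta> powr (\<alpha> / 2) \<le> qprob M \<alpha> B \<eta> \<delta> lam \<and>
      qprob M \<alpha> B \<eta> \<delta> lam \<le> C1 * \<delta> powr (\<alpha> / 2)"
    by blast
qed

end
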